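(* For any fence $F$, $\dim I_H(F)=\dim A_H(F)$.
   Context: A fence $\breve F(\alpha_1,\dots,\alpha_t)$ ($t\ge2$, positive integers, $\alpha_1,\alpha_t\ge2$) is the poset on $\{x_1,\dots,x_n\}$, $n=\alpha_1+\dots+\alpha_t-1$, with $a_i=\alpha_1+\dots+\alpha_i$, $a_0=0$, whose cover relations are: for $1\le j\le n-1$ with $a_{i-1}\le j<a_i$, $x_j\lessdot x_{j+1}$ if $i$ odd and $x_j\gtrdot x_{j+1}$ if $i$ even. $\mathcal J(F)$ is the set of order ideals; rowmotion $\rho$ sends $I$ to the order ideal generated by $\min(F\setminus I)$. A statistic $f:\mathcal J(F)\to\mathbb R$ is homomesic under rowmotion if its average over every $\rho$-orbit is the same constant. $\hat\chi_q(I)=1$ if $q\in I$, else 0; $\chi_q(I)=1$ if $q\in\max(I)$, else 0. $I_H(F)$ (resp. $A_H(F)$) is the subspace of $\operatorname{Span}_{\mathbb R}\{\hat\chi_q:q\in F\}$ (resp. $\operatorname{Span}_{\mathbb R}\{\chi_q:q\in F\}$) consisting of statistics homomesic under rowmotion. *)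

theory Defs
  imports Complex_Main "HOL-Library.Function_Algebras"
begin

(* A fence F(alpha_1,...,alpha_t) is encoded by the list alpha = [alpha_1,...,alpha_t]. *)
definition is_fence_comp :: "nat list \<Rightarrow> bool" where
  "is_fence_comp \<alpha> \<longleftrightarrow> length \<alpha> \<ge> 2 \<and> (\<forall>a\<in>set \<alpha>. a \<ge> 1) \<and> hd \<alpha> \<ge> 2 \<and> last \<alpha> \<ge> 2"

definition fence_a :: "nat list \<Rightarrow> nat \<Rightarrow> nat" where
  "fence_a \<alpha> i = sum_list (take i \<alpha>)"

definition fence_n :: "nat list \<Rightarrow> nat" where
  "fence_n \<alpha> = sum_list \<alpha> - 1"

(* elements x_1,...,x_n encoded as 1..n *)
definition fence_elems :: "nat list \<Rightarrow> nat set" where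
  "fence_elems \<alpha> = {1..fence_n \<alpha>}"

definition fence_seg :: "nat list \<Rightarrow> nat \<Rightarrow> nat" where
  "fence_seg \<alpha> j = (LEAST i. j < fence_a \<alpha> i)"

(* cover relations: (x, y) \<in> fence_cover means x \<lessdot> y *)
definition fence_cover :: "nat list \<Rightarrow> (nat \<times> nat) set" where
  "fence_cover \<alpha> =
     {(j, j + 1) | j. 1 \<le> j \<and> j \<le> fence_n \<alpha> - 1 \<and> odd (fence_seg \<alpha> j)} \<union>
     {(j + 1, j) | j. 1 \<le> j \<and> j \<le> fence_n \<alpha> - 1 \<and> even (fence_seg \<alpha> j)}"

definition fence_le :: "nat list \<Rightarrow> nat \<Rightarrow> nat \<Rightarrow> bool" where
  "fence_le \<alpha> x y \<longleftrightarrow> (x, y) \<in> (fence_cover \<alpha>)\<^sup>*"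

definition fence_ideals :: "nat list \<Rightarrow> nat set set" where
  "fence_ideals \<alpha> = {I. I \<subseteq> fence_elems \<alpha> \<and>
      (\<forall>x\<in>I. \<forall>y\<in>fence_elems \<alpha>. fence_le \<alpha> y x \<longrightarrow> y \<in> I)}"

definition fence_min :: "nat list \<Rightarrow> nat set \<Rightarrow> nat set" where
  "fence_min \<alpha> S = {x\<in>S. \<forall>y\<in>S. fence_le \<alpha> y x \<longrightarrow> y = x}"

definition fence_max :: "nat list \<Rightarrow> nat set \<Rightarrow> nat set" where
  "fence_max \<alpha> S = {x\<in>S. \<forall>y\<in>S. fence_le \<alpha> x y \<longrightarrow> y = x}"

definition rowmotion :: "nat list \<Rightarrow> nat set \<Rightarrow> nat set" where
  "rowmotion \<alpha> I = {y\<in>fence_elems \<alpha>. \<exists>x\<in>fence_min \<alpha> (fence_elems \<alpha> - I). fence_le \<alpha> y x}"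

definition row_orbit :: "nat list \<Rightarrow> nat set \<Rightarrow> nat set set" where
  "row_orbit \<alpha> I = {(rowmotion \<alpha> ^^ k) I | k. True}"

definition homomesic :: "nat list \<Rightarrow> (nat set \<Rightarrow> real) \<Rightarrow> bool" where
  "homomesic \<alpha> f \<longleftrightarrow> (\<exists>c. \<forall>I\<in>fence_ideals \<alpha>.
      (\<Sum>J\<in>row_orbit \<alpha> I. f J) / real (card (row_orbit \<alpha> I)) = c)"

definition hchi :: "nat \<Rightarrow> nat set \<Rightarrow> real" where
  "hchi q I = (if q \<in> I then 1 else 0)"

definition chi :: "nat list \<Rightarrow> nat \<Rightarrow> nat set \<Rightarrow> real" where
  "chi \<alpha> q I = (if q \<in> fence_max \<alpha> I then 1 else 0)"

definition stat_scale :: "real \<Rightarrow> (nat set \<Rightarrow> real) \<Rightarrow> (nat set \<Rightarrow> real)" where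
  "stat_scale c f = (\<lambda>I. c * f I)"

definition IH_space :: "nat list \<Rightarrow> (nat set \<Rightarrow> real) set" where
  "IH_space \<alpha> = {f \<in> module.span stat_scale (hchi ` fence_elems \<alpha>). homomesic \<alpha> f}"

definition AH_space :: "nat list \<Rightarrow> (nat set \<Rightarrow> real) set" where
  "AH_space \<alpha> = {f \<in> module.span stat_scale (chi \<alpha> ` fence_elems \<alpha>). homomesic \<alpha> f}"

end

theory Submission
  imports Defs
begin

(* Let H be the space of homomesic statistics. For q with at most one upper cover, chi q
   agrees on order ideals with hchi q minus the hchi u of the upper covers u of q. If q has
   two upper covers, it has no lower cover, so chi q (rowmotion I) = 1 - hchi q I; as
   rowmotion permutes each orbit, chi q + hchi q then has orbit average 1. Hence chi q
   differs by an element of H from a combination hchi_proxy q of the hchi's, and these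
   proxies are triangular with respect to the hchi's, so they form another basis of their
   span. The linear map chi q |-> hchi_proxy q is therefore an isomorphism of the two spans
   that moves every vector by an element of H, and it maps A_H(F) onto I_H(F). *)

lemma sum_fun_apply: "(\<Sum>u\<in>A. f u) x = (\<Sum>u\<in>A. f u x)"
  by (induction A rule: infinite_finite_induct) auto

lemma sum_orbit_comp_eq:
  assumes "finite S" "f ` S \<subseteq> S" "inj_on f S" "x \<in> S"
  shows "(\<Sum>y\<in>{(f ^^ k) x |k. True}. g (f y)) = (\<Sum>y\<in>{(f ^^ k) x |k. True}. g y)"
proof -
  define Orb where "Orb = {(f ^^ k) x |k. True}"
  have "(f ^^ k) x \<in> S" for k
    using assms(2,4) by (induction k) auto
  then have "Orb \<subseteq> S" unfolding Orb_def by blast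
  have "f ((f ^^ k) x) \<in> Orb" for k
    unfolding Orb_def by (rule CollectI, rule exI[of _ "Suc k"]) simp
  then have "f ` Orb \<subseteq> Orb"
    unfolding Orb_def by blast
  have "inj_on f Orb" by (rule inj_on_subset[OF assms(3) \<open>Orb \<subseteq> S\<close>])
  then have "f ` Orb = Orb"
    using endo_inj_surj finite_subset[OF \<open>Orb \<subseteq> S\<close> assms(1)] \<open>f ` Orb \<subseteq> Orb\<close> by blast
  then have "(\<Sum>y\<in>Orb. g y) = (\<Sum>y\<in>f ` Orb. g y)" by simp
  also have "\<dots> = (\<Sum>y\<in>Orb. g (f y))" using sum.reindex[OF \<open>inj_on f Orb\<close>] by simp
  finally show ?thesis unfolding Orb_def by simp
qed

context vector_space_pair
begin

lemma dim_image_eq_if_inj_on_span: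
  assumes "Vector_Spaces.linear s1 s2 f" "inj_on f (vs1.span S)"
  shows "vs2.dim (f ` S) = vs1.dim S"
proof -
  interpret f: Vector_Spaces.linear s1 s2 f by fact
  obtain B where B: "B \<subseteq> S" "vs1.independent B" "S \<subseteq> vs1.span B" "card B = vs1.dim S"
    using vs1.basis_exists[of S] by metis
  have inj: "inj_on f (vs1.span B)"
    using inj_on_subset[OF assms(2) vs1.span_mono[OF B(1)]] .
  have indep: "vs2.independent (f ` B)"
    by (rule f.independent_injective_image[OF B(2) inj])
  have card: "card (f ` B) = card B"
    by (rule card_image[OF inj_on_subset[OF inj vs1.span_superset]])
  have span: "f ` S \<subseteq> vs2.span (f ` B)"
    using image_mono[OF B(3), of f] by (simp add: f.span_image)
  have "f ` B \<subseteq> f ` S"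
    using B(1) by (rule image_mono)
  from vs2.dim_unique[OF this span indep card] show ?thesis
    using B(4) by simp
qed

end

context vector_space
begin

lemma independent_inj_on_if_span_eq:
  assumes "finite F" "independent (b ` F)" "inj_on b F" "span (c ` F) = span (b ` F)"
  shows "independent (c ` F)" and "inj_on c F"
proof -
  obtain B where B: "B \<subseteq> c ` F" "independent B" "card B = dim (c ` F)"
    using basis_exists[of "c ` F"] by metis
  have "dim (c ` F) = card F"
    using dim_span[of "c ` F"] assms(4) dim_span_eq_card_independent[OF assms(2)]
      card_image[OF assms(3)] by simp
  then have "card (c ` F) \<le> card B"
    using B(3) card_image_le[OF assms(1)] by simp
  then have "B = c ` F"
    using card_seteq[OF _ B(1)] assms(1) by blast
  then show "independent (c ` F)"
    using B(2) by simp
  show "inj_on c F"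
    using \<open>B = c ` F\<close> B(3) \<open>dim (c ` F) = card F\<close> assms(1) eq_card_imp_inj_on[of F c] by simp
qed

lemma subspace_displacement_in:
  assumes H: "subspace H" and "Vector_Spaces.linear scale scale T"
  shows "subspace {x. x - T x \<in> H}"
proof -
  interpret T: Vector_Spaces.linear scale scale T by fact
  show ?thesis
  proof (unfold subspace_def, intro conjI ballI allI)
    show "0 \<in> {x. x - T x \<in> H}"
      using H subspace_0 by (simp add: T.zero)
  next
    fix x y assume "x \<in> {x. x - T x \<in> H}" "y \<in> {x. x - T x \<in> H}"
    then have "(x - T x) + (y - T y) \<in> H" using H subspace_add by blast
    then show "x + y \<in> {x. x - T x \<in> H}" by (simp add: T.add algebra_simps)
  next
    fix a x assume "x \<in> {x. x - T x \<in> H}"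
    then have "scale a (x - T x) \<in> H" using H subspace_scale by blast
    then show "scale a x \<in> {x. x - T x \<in> H}" by (simp add: T.scale scale_right_diff_distrib)
  qed
qed

lemma image_span_inter_subspace_eq:
  assumes H: "subspace H" and "Vector_Spaces.linear scale scale T"
    and shift: "\<And>x. x \<in> span B \<Longrightarrow> x - T x \<in> H"
  shows "T ` (span B \<inter> H) = span (T ` B) \<inter> H"
proof -
  interpret T: Vector_Spaces.linear scale scale T by fact
  show ?thesis
  proof (intro equalityI subsetI)
    fix y assume "y \<in> T ` (span B \<inter> H)"
    then obtain x where x: "x \<in> span B" "x \<in> H" "y = T x" by blast
    have "y \<in> span (T ` B)"
      unfolding x(3) T.span_image using x(1) by (rule imageI)
    moreover have "x - (x - T x) \<in> H"
      using subspace_diff[OF H x(2) shift[OF x(1)]] .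
    ultimately show "y \<in> span (T ` B) \<inter> H"
      using x(3) by simp
  next
    fix y assume y: "y \<in> span (T ` B) \<inter> H"
    then obtain x where x: "x \<in> span B" "y = T x"
      unfolding T.span_image by blast
    have "y + (x - T x) \<in> H"
      using y subspace_add[OF H _ shift[OF x(1)]] by blast
    then have "x \<in> H" using x(2) by simp
    then show "y \<in> T ` (span B \<inter> H)" using x by blast
  qed
qed

lemma dim_span_inter_subspace_eq:
  assumes H: "subspace H"
    and b: "independent (b ` F)" "inj_on b F"
    and c: "independent (c ` F)" "inj_on c F"
    and diff: "\<And>i. i \<in> F \<Longrightarrow> b i - c i \<in> H"
  shows "dim (span (b ` F) \<inter> H) = dim (span (c ` F) \<inter> H)"
proof -
  interpret pair: vector_space_pair scale scale ..
  obtain T where T: "Vector_Spaces.linear scale scale T" and T_b: "\<And>i. i \<in> F \<Longrightarrow> T (b i) = c i"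
    using pair.linear_independent_extend[OF b(1), of "\<lambda>x. c (inv_into F b x)"] b(2) by auto
  interpret T: Vector_Spaces.linear scale scale T by fact
  have T_image: "T ` b ` F = c ` F"
    using T_b by (force simp: image_image)
  have "inj_on T (b ` F)"
    using T_b c(2) unfolding inj_on_def by fastforce
  then have "inj_on T (span (b ` F))"
    using T.inj_on_span_iff_independent_image T_image c(1) by simp
  then have "inj_on T (span (span (b ` F) \<inter> H))"
    by (rule inj_on_subset) (simp add: span_minimal)
  then have "dim (T ` (span (b ` F) \<inter> H)) = dim (span (b ` F) \<inter> H)"
    by (rule pair.dim_image_eq_if_inj_on_span[OF T])
  moreover have "b ` F \<subseteq> {x. x - T x \<in> H}"
    using diff T_b by auto
  then have "x - T x \<in> H" if "x \<in> span (b ` F)" for x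
    using span_minimal[OF _ subspace_displacement_in[OF H T]] that by blast
  then have "T ` (span (b ` F) \<inter> H) = span (c ` F) \<inter> H"
    using image_span_inter_subspace_eq[OF H T] T_image by metis
  ultimately show ?thesis by simp
qed

end

lemma fence_cover_iff:
  "(x, y) \<in> fence_cover \<alpha> \<longleftrightarrow>
     (y = x + 1 \<and> 1 \<le> x \<and> x \<le> fence_n \<alpha> - 1 \<and> odd (fence_seg \<alpha> x)) \<or>
     (x = y + 1 \<and> 1 \<le> y \<and> y \<le> fence_n \<alpha> - 1 \<and> even (fence_seg \<alpha> y))"
  unfolding fence_cover_def by auto

lemma fence_cover_subset: "fence_cover \<alpha> \<subseteq> fence_elems \<alpha> \<times> fence_elems \<alpha>"
  unfolding fence_elems_def by (auto simp: fence_cover_iff)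

lemma fence_cover_adjacent: "(x, y) \<in> fence_cover \<alpha> \<Longrightarrow> y = x + 1 \<or> x = y + 1"
  unfolding fence_cover_iff by auto

lemma fence_cover_asym: "(x, y) \<in> fence_cover \<alpha> \<Longrightarrow> (y, x) \<notin> fence_cover \<alpha>"
  unfolding fence_cover_iff by auto

lemma trancl_fence_cover_imp_monotone_chain:
  assumes "(x, y) \<in> (fence_cover \<alpha>)\<^sup>+"
  shows "x < y \<and> (\<forall>j\<in>{x..<y}. (j, j + 1) \<in> fence_cover \<alpha>) \<or>
         y < x \<and> (\<forall>j\<in>{y..<x}. (j + 1, j) \<in> fence_cover \<alpha>)"
  using assms
proof (induction rule: trancl_induct)
  case (base y)
  then show ?case
    using fence_cover_adjacent[OF base] by (auto simp: less_Suc_eq)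
next
  case (step y z)
  from fence_cover_adjacent[OF step(2)] show ?case
  proof
    assume z: "z = y + 1"
    then have "\<not> (y < x \<and> (y + 1, y) \<in> fence_cover \<alpha>)"
      using step(2) fence_cover_asym by blast
    then have "x < y \<and> (\<forall>j\<in>{x..<y}. (j, j + 1) \<in> fence_cover \<alpha>)"
      using step(3) by auto
    then show ?thesis
      using step(2) z by (auto simp: less_Suc_eq)
  next
    assume y: "y = z + 1"
    then have "\<not> (x \<le> z \<and> (z, z + 1) \<in> fence_cover \<alpha>)"
      using step(2) fence_cover_asym by blast
    then have "y < x \<and> (\<forall>j\<in>{y..<x}. (j + 1, j) \<in> fence_cover \<alpha>)"
      using step(3) y by auto
    then show ?thesis
      using step(2) y by (auto simp: le_less Suc_le_eq)
  qed
qed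

lemma acyclic_fence_cover: "acyclic (fence_cover \<alpha>)"
  unfolding acyclic_def using trancl_fence_cover_imp_monotone_chain by blast

lemma finite_fence_cover: "finite (fence_cover \<alpha>)"
  by (rule finite_subset[OF fence_cover_subset]) (simp add: fence_elems_def)

lemma wf_fence_cover: "wf (fence_cover \<alpha>)"
  by (rule finite_acyclic_wf[OF finite_fence_cover acyclic_fence_cover])

lemma wf_converse_fence_cover: "wf ((fence_cover \<alpha>)\<inverse>)"
  by (rule finite_acyclic_wf_converse[OF finite_fence_cover acyclic_fence_cover])

lemma fence_le_refl: "fence_le \<alpha> x x"
  unfolding fence_le_def by simp

lemma fence_le_trans: "fence_le \<alpha> x y \<Longrightarrow> fence_le \<alpha> y z \<Longrightarrow> fence_le \<alpha> x z"
  unfolding fence_le_def by simp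

lemma fence_le_antisym: "fence_le \<alpha> x y \<Longrightarrow> fence_le \<alpha> y x \<Longrightarrow> x = y"
  using acyclic_fence_cover[of \<alpha>] unfolding fence_le_def acyclic_def
  by (metis rtrancl_eq_or_trancl rtrancl_trancl_trancl)

lemma fence_cover_imp_le: "(x, y) \<in> fence_cover \<alpha> \<Longrightarrow> fence_le \<alpha> x y"
  unfolding fence_le_def by simp

lemma fence_max_iff:
  assumes "I \<in> fence_ideals \<alpha>"
  shows "q \<in> fence_max \<alpha> I \<longleftrightarrow> q \<in> I \<and> (\<forall>u. (q, u) \<in> fence_cover \<alpha> \<longrightarrow> u \<notin> I)"
proof
  assume "q \<in> fence_max \<alpha> I"
  then show "q \<in> I \<and> (\<forall>u. (q, u) \<in> fence_cover \<alpha> \<longrightarrow> u \<notin> I)"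
    unfolding fence_max_def using fence_cover_imp_le fence_cover_asym by fastforce
next
  assume q: "q \<in> I \<and> (\<forall>u. (q, u) \<in> fence_cover \<alpha> \<longrightarrow> u \<notin> I)"
  have "y = q" if "y \<in> I" "fence_le \<alpha> q y" for y
  proof (rule ccontr)
    assume "y \<noteq> q"
    then obtain u where u: "(q, u) \<in> fence_cover \<alpha>" "fence_le \<alpha> u y"
      using \<open>fence_le \<alpha> q y\<close> unfolding fence_le_def by (metis converse_rtranclE)
    then have "u \<in> I"
      using assms \<open>y \<in> I\<close> fence_cover_subset unfolding fence_ideals_def by blast
    then show False using q u by blast
  qed
  then show "q \<in> fence_max \<alpha> I" using q unfolding fence_max_def by blast
qed

lemma fence_min_compl_iff:
  assumes "I \<in> fence_ideals \<alpha>" and "q \<in> fence_elems \<alpha>"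
  shows "q \<in> fence_min \<alpha> (fence_elems \<alpha> - I) \<longleftrightarrow>
           q \<notin> I \<and> (\<forall>d. (d, q) \<in> fence_cover \<alpha> \<longrightarrow> d \<in> I)"
proof
  assume "q \<in> fence_min \<alpha> (fence_elems \<alpha> - I)"
  then show "q \<notin> I \<and> (\<forall>d. (d, q) \<in> fence_cover \<alpha> \<longrightarrow> d \<in> I)"
    unfolding fence_min_def
    using fence_cover_imp_le fence_cover_asym fence_cover_subset by fastforce
next
  assume q: "q \<notin> I \<and> (\<forall>d. (d, q) \<in> fence_cover \<alpha> \<longrightarrow> d \<in> I)"
  have "y = q" if "y \<in> fence_elems \<alpha> - I" "fence_le \<alpha> y q" for y
  proof (rule ccontr)
    assume "y \<noteq> q"
    then obtain d where "(d, q) \<in> fence_cover \<alpha>" "fence_le \<alpha> y d"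
      using \<open>fence_le \<alpha> y q\<close> unfolding fence_le_def by (metis rtranclE)
    then have "y \<in> I" using assms(1) q that(1) unfolding fence_ideals_def by blast
    then show False using that(1) by blast
  qed
  then show "q \<in> fence_min \<alpha> (fence_elems \<alpha> - I)"
    using q assms(2) unfolding fence_min_def by blast
qed

lemma rowmotion_in_fence_ideals: "rowmotion \<alpha> I \<in> fence_ideals \<alpha>"
  unfolding fence_ideals_def rowmotion_def using fence_le_trans by blast

lemma fence_max_rowmotion: "fence_max \<alpha> (rowmotion \<alpha> I) = fence_min \<alpha> (fence_elems \<alpha> - I)"
proof (intro set_eqI iffI)
  fix x assume x: "x \<in> fence_max \<alpha> (rowmotion \<alpha> I)"
  then obtain m where m: "m \<in> fence_min \<alpha> (fence_elems \<alpha> - I)" "fence_le \<alpha> x m"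
    unfolding fence_max_def rowmotion_def by blast
  then have "m \<in> rowmotion \<alpha> I"
    unfolding rowmotion_def fence_min_def using fence_le_refl by blast
  then show "x \<in> fence_min \<alpha> (fence_elems \<alpha> - I)"
    using x m unfolding fence_max_def by blast
next
  fix x assume x: "x \<in> fence_min \<alpha> (fence_elems \<alpha> - I)"
  have "y = x" if y: "y \<in> rowmotion \<alpha> I" and xy: "fence_le \<alpha> x y" for y
  proof -
    obtain m where "m \<in> fence_min \<alpha> (fence_elems \<alpha> - I)" "fence_le \<alpha> y m"
      using y unfolding rowmotion_def by blast
    then show "y = x"
      using x xy fence_le_trans fence_le_antisym unfolding fence_min_def by blast
  qed
  moreover have "x \<in> rowmotion \<alpha> I"
    using x fence_le_refl unfolding rowmotion_def fence_min_def by blast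
  ultimately show "x \<in> fence_max \<alpha> (rowmotion \<alpha> I)" unfolding fence_max_def by blast
qed

lemma mem_fence_ideal_iff:
  assumes "I \<in> fence_ideals \<alpha>"
  shows "y \<in> I \<longleftrightarrow>
           y \<in> fence_elems \<alpha> \<and> (\<forall>m\<in>fence_min \<alpha> (fence_elems \<alpha> - I). \<not> fence_le \<alpha> m y)"
proof
  assume "y \<in> I"
  then show "y \<in> fence_elems \<alpha> \<and> (\<forall>m\<in>fence_min \<alpha> (fence_elems \<alpha> - I). \<not> fence_le \<alpha> m y)"
    using assms unfolding fence_ideals_def fence_min_def by blast
next
  assume y: "y \<in> fence_elems \<alpha> \<and> (\<forall>m\<in>fence_min \<alpha> (fence_elems \<alpha> - I). \<not> fence_le \<alpha> m y)"
  show "y \<in> I"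
  proof (rule ccontr)
    assume "y \<notin> I"
    define Q where "Q = {z \<in> fence_elems \<alpha> - I. fence_le \<alpha> z y}"
    have "y \<in> Q" using y \<open>y \<notin> I\<close> fence_le_refl unfolding Q_def by blast
    then obtain z where z: "z \<in> Q" and z_min: "\<And>d. (d, z) \<in> fence_cover \<alpha> \<Longrightarrow> d \<notin> Q"
      using wfE_min[OF wf_fence_cover] by metis
    have "d \<in> I" if "(d, z) \<in> fence_cover \<alpha>" for d
      using z_min[OF that] z fence_cover_subset that fence_le_trans[OF fence_cover_imp_le[OF that]]
      unfolding Q_def by blast
    then have "z \<in> fence_min \<alpha> (fence_elems \<alpha> - I)"
      using fence_min_compl_iff[OF assms] z unfolding Q_def by blast
    then show False using y z unfolding Q_def by blast
  qed
qed

lemma inj_on_rowmotion: "inj_on (rowmotion \<alpha>) (fence_ideals \<alpha>)"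
proof
  fix I J assume I: "I \<in> fence_ideals \<alpha>" and J: "J \<in> fence_ideals \<alpha>"
    and "rowmotion \<alpha> I = rowmotion \<alpha> J"
  then have "fence_min \<alpha> (fence_elems \<alpha> - I) = fence_min \<alpha> (fence_elems \<alpha> - J)"
    by (metis fence_max_rowmotion)
  then show "I = J"
    using mem_fence_ideal_iff[OF I] mem_fence_ideal_iff[OF J] by blast
qed

lemma finite_fence_ideals: "finite (fence_ideals \<alpha>)"
  by (rule finite_subset[of _ "Pow (fence_elems \<alpha>)"]) (auto simp: fence_ideals_def fence_elems_def)

lemma funpow_rowmotion_in_fence_ideals:
  "I \<in> fence_ideals \<alpha> \<Longrightarrow> (rowmotion \<alpha> ^^ k) I \<in> fence_ideals \<alpha>"
  by (cases k) (simp_all add: rowmotion_in_fence_ideals)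

lemma row_orbit_subset: "I \<in> fence_ideals \<alpha> \<Longrightarrow> row_orbit \<alpha> I \<subseteq> fence_ideals \<alpha>"
  unfolding row_orbit_def using funpow_rowmotion_in_fence_ideals by blast

lemma finite_row_orbit: "I \<in> fence_ideals \<alpha> \<Longrightarrow> finite (row_orbit \<alpha> I)"
  using row_orbit_subset finite_fence_ideals by (rule finite_subset)

lemma card_row_orbit_pos: "I \<in> fence_ideals \<alpha> \<Longrightarrow> 0 < card (row_orbit \<alpha> I)"
  using finite_row_orbit[of I \<alpha>] unfolding card_gt_0_iff row_orbit_def
  by (auto intro!: exI[of _ 0])

definition orbit_avg :: "nat list \<Rightarrow> (nat set \<Rightarrow> real) \<Rightarrow> nat set \<Rightarrow> real" where
  "orbit_avg \<alpha> f I = (\<Sum>J\<in>row_orbit \<alpha> I. f J) / real (card (row_orbit \<alpha> I))"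

lemma homomesic_iff_orbit_avg:
  "homomesic \<alpha> f \<longleftrightarrow> (\<exists>c. \<forall>I\<in>fence_ideals \<alpha>. orbit_avg \<alpha> f I = c)"
  unfolding homomesic_def orbit_avg_def ..

lemma orbit_avg_add: "orbit_avg \<alpha> (f + g) I = orbit_avg \<alpha> f I + orbit_avg \<alpha> g I"
  unfolding orbit_avg_def by (simp add: sum.distrib add_divide_distrib)

lemma orbit_avg_diff: "orbit_avg \<alpha> (f - g) I = orbit_avg \<alpha> f I - orbit_avg \<alpha> g I"
  unfolding orbit_avg_def by (simp add: sum_subtractf diff_divide_distrib)

lemma orbit_avg_scale: "orbit_avg \<alpha> (stat_scale c f) I = c * orbit_avg \<alpha> f I"
  unfolding orbit_avg_def stat_scale_def by (simp add: sum_distrib_left)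

lemma orbit_avg_const: "I \<in> fence_ideals \<alpha> \<Longrightarrow> orbit_avg \<alpha> (\<lambda>_. c) I = c"
  unfolding orbit_avg_def using card_row_orbit_pos[of I \<alpha>] by simp

lemma orbit_avg_cong:
  assumes "I \<in> fence_ideals \<alpha>" "\<And>J. J \<in> fence_ideals \<alpha> \<Longrightarrow> f J = g J"
  shows "orbit_avg \<alpha> f I = orbit_avg \<alpha> g I"
  unfolding orbit_avg_def using row_orbit_subset[OF assms(1)] assms(2)
  by (metis (no_types, lifting) subsetD sum.cong)

lemma orbit_avg_comp_rowmotion:
  assumes "I \<in> fence_ideals \<alpha>"
  shows "orbit_avg \<alpha> (\<lambda>J. f (rowmotion \<alpha> J)) I = orbit_avg \<alpha> f I"
proof -
  have "rowmotion \<alpha> ` fence_ideals \<alpha> \<subseteq> fence_ideals \<alpha>"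
    using rowmotion_in_fence_ideals by blast
  from sum_orbit_comp_eq[OF finite_fence_ideals this inj_on_rowmotion assms, where g = f]
  show ?thesis unfolding orbit_avg_def row_orbit_def by simp
qed

interpretation stat: vector_space stat_scale
  by unfold_locales (simp_all add: stat_scale_def fun_eq_iff algebra_simps)

lemma subspace_homomesic: "stat.subspace {f. homomesic \<alpha> f}"
  unfolding stat.subspace_def homomesic_iff_orbit_avg
  by (auto simp: orbit_avg_add orbit_avg_scale
      orbit_avg_const[of _ _ 0, unfolded zero_fun_def[symmetric]])

definition fence_upper_covers :: "nat list \<Rightarrow> nat \<Rightarrow> nat set" where
  "fence_upper_covers \<alpha> q = {u. (q, u) \<in> fence_cover \<alpha>}"

lemma fence_upper_covers_subset_neighbours: "fence_upper_covers \<alpha> q \<subseteq> {q + 1, q - 1}"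
  using fence_cover_adjacent unfolding fence_upper_covers_def by force

lemma finite_fence_upper_covers: "finite (fence_upper_covers \<alpha> q)"
  using fence_upper_covers_subset_neighbours by (rule finite_subset) simp

lemma fence_upper_covers_subset: "fence_upper_covers \<alpha> q \<subseteq> fence_elems \<alpha>"
  using fence_cover_subset unfolding fence_upper_covers_def by blast

lemma no_lower_cover_if_two_upper_covers:
  assumes "1 < card (fence_upper_covers \<alpha> q)"
  shows "(d, q) \<notin> fence_cover \<alpha>"
proof
  assume d: "(d, q) \<in> fence_cover \<alpha>"
  then have "d \<in> {q + 1, q - 1}"
    using fence_cover_adjacent by force
  moreover have "d \<notin> fence_upper_covers \<alpha> q"
    using fence_cover_asym[OF d] unfolding fence_upper_covers_def by blast
  ultimately have "fence_upper_covers \<alpha> q \<subseteq> {q + 1, q - 1} - {d}"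
    using fence_upper_covers_subset_neighbours by blast
  then have "card (fence_upper_covers \<alpha> q) \<le> card ({q + 1, q - 1} - {d})"
    by (rule card_mono[rotated]) simp
  also have "\<dots> \<le> 1"
    using \<open>d \<in> {q + 1, q - 1}\<close> by (cases "q + 1 = q - 1") auto
  finally show False using assms by simp
qed

lemma chi_eq_hchi_minus_upper_covers:
  assumes "q \<in> fence_elems \<alpha>" "card (fence_upper_covers \<alpha> q) \<le> 1" "I \<in> fence_ideals \<alpha>"
  shows "chi \<alpha> q I = hchi q I - (\<Sum>u\<in>fence_upper_covers \<alpha> q. hchi u I)"
proof -
  consider "fence_upper_covers \<alpha> q = {}" | u where "fence_upper_covers \<alpha> q = {u}"
    using assms(2) finite_fence_upper_covers[of \<alpha> q]
    by (metis One_nat_def card_1_singletonE card_0_eq le_SucE le_zero_eq)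
  then show ?thesis
  proof cases
    case 1
    then show ?thesis
      using fence_max_iff[OF assms(3), of q]
      unfolding chi_def hchi_def fence_upper_covers_def by auto
  next
    case (2 u)
    then have "(q, u) \<in> fence_cover \<alpha>" unfolding fence_upper_covers_def by blast
    then have "u \<in> I \<Longrightarrow> q \<in> I"
      using assms(1,3) fence_cover_imp_le unfolding fence_ideals_def by blast
    then show ?thesis
      using 2 fence_max_iff[OF assms(3), of q]
      unfolding chi_def hchi_def fence_upper_covers_def by auto
  qed
qed

lemma chi_rowmotion_eq_one_minus_hchi:
  assumes "q \<in> fence_elems \<alpha>" "1 < card (fence_upper_covers \<alpha> q)" "I \<in> fence_ideals \<alpha>"
  shows "chi \<alpha> q (rowmotion \<alpha> I) = 1 - hchi q I"
  using fence_min_compl_iff[OF assms(3,1)] no_lower_cover_if_two_upper_covers[OF assms(2)]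
  unfolding chi_def hchi_def fence_max_rowmotion by auto

definition hchi_proxy :: "nat list \<Rightarrow> nat \<Rightarrow> nat set \<Rightarrow> real" where
  "hchi_proxy \<alpha> q =
     (if card (fence_upper_covers \<alpha> q) \<le> 1
      then hchi q - (\<Sum>u\<in>fence_upper_covers \<alpha> q. hchi u) else - hchi q)"

lemma homomesic_chi_minus_hchi_proxy:
  assumes "q \<in> fence_elems \<alpha>"
  shows "homomesic \<alpha> (chi \<alpha> q - hchi_proxy \<alpha> q)"
proof (cases "card (fence_upper_covers \<alpha> q) \<le> 1")
  case True
  then have proxy: "hchi_proxy \<alpha> q = hchi q - (\<Sum>u\<in>fence_upper_covers \<alpha> q. hchi u)"
    unfolding hchi_proxy_def by simp
  have "orbit_avg \<alpha> (chi \<alpha> q - hchi_proxy \<alpha> q) I = 0" if "I \<in> fence_ideals \<alpha>" for I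
  proof -
    have "orbit_avg \<alpha> (chi \<alpha> q - hchi_proxy \<alpha> q) I = orbit_avg \<alpha> (\<lambda>_. 0) I"
      using that chi_eq_hchi_minus_upper_covers[OF assms True]
      by (intro orbit_avg_cong) (simp_all add: proxy sum_fun_apply)
    then show ?thesis using orbit_avg_const[OF that] by simp
  qed
  then show ?thesis unfolding homomesic_iff_orbit_avg by blast
next
  case False
  then have proxy: "hchi_proxy \<alpha> q = - hchi q"
    unfolding hchi_proxy_def by simp
  have "orbit_avg \<alpha> (chi \<alpha> q - hchi_proxy \<alpha> q) I = 1" if I: "I \<in> fence_ideals \<alpha>" for I
  proof -
    have "orbit_avg \<alpha> (chi \<alpha> q) I = orbit_avg \<alpha> (\<lambda>J. chi \<alpha> q (rowmotion \<alpha> J)) I"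
      using orbit_avg_comp_rowmotion[OF I] by simp
    also have "\<dots> = orbit_avg \<alpha> ((\<lambda>_. 1) - hchi q) I"
      using chi_rowmotion_eq_one_minus_hchi[OF assms] False I by (intro orbit_avg_cong) auto
    also have "\<dots> = 1 - orbit_avg \<alpha> (hchi q) I"
      using orbit_avg_diff orbit_avg_const[OF I] by simp
    finally show ?thesis
      using orbit_avg_add[of \<alpha> "chi \<alpha> q" "hchi q" I]
      by (simp add: proxy)
  qed
  then show ?thesis unfolding homomesic_iff_orbit_avg by blast
qed

lemma hchi_proxy_in_span_hchi:
  assumes "q \<in> fence_elems \<alpha>"
  shows "hchi_proxy \<alpha> q \<in> stat.span (hchi ` fence_elems \<alpha>)"
proof (cases "card (fence_upper_covers \<alpha> q) \<le> 1")
  case True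
  then show ?thesis
    unfolding hchi_proxy_def if_P[OF True]
    using assms fence_upper_covers_subset[of \<alpha> q]
    by (intro stat.span_diff stat.span_sum stat.span_base) auto
next
  case False
  then show ?thesis
    unfolding hchi_proxy_def if_not_P[OF False]
    using assms by (intro stat.span_neg stat.span_base) simp
qed

lemma hchi_in_span_hchi_proxy:
  "q \<in> fence_elems \<alpha> \<Longrightarrow> hchi q \<in> stat.span (hchi_proxy \<alpha> ` fence_elems \<alpha>)"
proof (induction q rule: wf_induct[OF wf_converse_fence_cover[of \<alpha>]])
  case (1 q)
  show ?case
  proof (cases "card (fence_upper_covers \<alpha> q) \<le> 1")
    case True
    have "hchi u \<in> stat.span (hchi_proxy \<alpha> ` fence_elems \<alpha>)"
      if "u \<in> fence_upper_covers \<alpha> q" for u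
      using 1 that fence_upper_covers_subset unfolding fence_upper_covers_def by blast
    moreover have "hchi q = hchi_proxy \<alpha> q + (\<Sum>u\<in>fence_upper_covers \<alpha> q. hchi u)"
      using True unfolding hchi_proxy_def by simp
    ultimately show ?thesis
      using "1.prems" by (metis stat.span_add stat.span_sum stat.span_base imageI)
  next
    case False
    then have "hchi q = - hchi_proxy \<alpha> q"
      unfolding hchi_proxy_def by simp
    then show ?thesis
      using "1.prems" by (metis stat.span_neg stat.span_base imageI)
  qed
qed

lemma span_hchi_proxy:
  "stat.span (hchi_proxy \<alpha> ` fence_elems \<alpha>) = stat.span (hchi ` fence_elems \<alpha>)"
  unfolding stat.span_eq using hchi_proxy_in_span_hchi hchi_in_span_hchi_proxy by blast

lemma independent_if_delta_on_singletons:
  fixes g :: "nat \<Rightarrow> nat set \<Rightarrow> real"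
  assumes "finite A" and delta: "\<And>p q. g q {p} = (if q = p then 1 else 0)"
  shows "stat.independent (g ` A)" and "inj_on g A"
proof -
  show "inj_on g A"
    by (rule inj_onI) (metis delta zero_neq_one)
  show "stat.independent (g ` A)"
  proof (rule stat.independent_if_scalars_zero)
    show "finite (g ` A)" using assms(1) by simp
    fix a x assume zero: "(\<Sum>x\<in>g ` A. stat_scale (a x) x) = 0" and "x \<in> g ` A"
    then obtain q where q: "q \<in> A" "x = g q" by blast
    have "0 = (\<Sum>x\<in>g ` A. stat_scale (a x) x) {q}" using zero by simp
    also have "\<dots> = (\<Sum>p\<in>A. a (g p) * g p {q})"
      using sum.reindex[OF \<open>inj_on g A\<close>] by (simp add: sum_fun_apply stat_scale_def)
    also have "\<dots> = a (g q)"
      using q(1) assms(1) by (simp add: delta if_distrib cong: if_cong)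
    finally show "a x = 0" using q(2) by simp
  qed
qed

lemma hchi_singleton: "hchi q {p} = (if q = p then 1 else 0)"
  unfolding hchi_def by simp

lemma chi_singleton: "chi \<alpha> q {p} = (if q = p then 1 else 0)"
  unfolding chi_def fence_max_def by auto

theorem theorem7p1:
  fixes \<alpha> :: "nat list"
  assumes "is_fence_comp \<alpha>"
  shows "vector_space.dim stat_scale (IH_space \<alpha>) = vector_space.dim stat_scale (AH_space \<alpha>)"
proof -
  define F where "F = fence_elems \<alpha>"
  define H where "H = {f. homomesic \<alpha> f}"
  have "finite F" unfolding F_def fence_elems_def by simp
  note hchi_basis = independent_if_delta_on_singletons[OF \<open>finite F\<close> hchi_singleton]
  note chi_basis = independent_if_delta_on_singletons[OF \<open>finite F\<close> chi_singleton[of \<alpha>]]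
  note proxy_basis = stat.independent_inj_on_if_span_eq
    [OF \<open>finite F\<close> hchi_basis span_hchi_proxy[of \<alpha>, folded F_def]]
  have "stat.dim (AH_space \<alpha>) = stat.dim (stat.span (chi \<alpha> ` F) \<inter> H)"
    unfolding AH_space_def F_def H_def by (rule arg_cong[where f = stat.dim]) blast
  also have "\<dots> = stat.dim (stat.span (hchi_proxy \<alpha> ` F) \<inter> H)"
    unfolding H_def
    by (rule stat.dim_span_inter_subspace_eq[OF subspace_homomesic chi_basis proxy_basis])
      (simp add: F_def homomesic_chi_minus_hchi_proxy)
  also have "\<dots> = stat.dim (IH_space \<alpha>)"
    unfolding F_def span_hchi_proxy IH_space_def H_def
    by (rule arg_cong[where f = stat.dim]) blast
  finally show ?thesis by simp
qed

end
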